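(* Let $n\ge 2$ and let $Q\in\mathbb{R}^{n\times n}$ be an irreducible generator matrix of a continuous-time Markov chain ($q_{ij}\ge0$ for $i\ne j$, $q_{ii}=-\sum_{j\ne i}q_{ij}$). Let $\boldsymbol v$ be the positive eigenvector of $Q^\top$ for eigenvalue $0$ with $\boldsymbol 1_n^\top\boldsymbol v=1$, and let $L^*$ be the matrix with entries $L^*_{ii}=\sum_{j\ne i}q_{ji}\frac{v_j}{v_i}$ and $L^*_{ij}=-q_{ji}\frac{v_j}{v_i}$ for $i\ne j$. Let $B=\operatorname{diag}(\beta_i)$ with all $\beta_i>0$ and $D=\operatorname{diag}(\delta_i)$ with all $\delta_i\ge 0$ and at least one $\delta_i>0$. Let $A=(L^*+D)^{-1}B$ and define, for $\boldsymbol p\in\mathbb{R}^n$ with $\boldsymbol p\ge\boldsymbol 0$, \[ H(\boldsymbol p)=(I+A\operatorname{diag}(\boldsymbol p))^{-1}A\boldsymbol p . \] If $H$ has a fixed point $\boldsymbol p^*\gg\boldsymbol 0$, then it is the unique fixed point of $H$ with all entries strictly positive.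
   Context: For vectors, $\boldsymbol x\gg\boldsymbol y$ means $x_i>y_i$ for all $i$, and $\boldsymbol x\ge\boldsymbol y$ means $x_i\ge y_i$ for all $i$. *)

theory Defs
  imports "HOL-Analysis.Analysis"
begin

definition diagm :: "real ^ 'n \<Rightarrow> real ^ 'n ^ 'n" where
  "diagm x = (\<chi> i j. if i = j then x $ i else 0)"

definition generator_matrix :: "real ^ 'n ^ 'n \<Rightarrow> bool" where
  "generator_matrix Q \<longleftrightarrow>
     (\<forall>i j. i \<noteq> j \<longrightarrow> Q $ i $ j \<ge> 0) \<and>
     (\<forall>i. Q $ i $ i = - (\<Sum>j\<in>UNIV - {i}. Q $ i $ j))"

definition irreducible_matrix :: "real ^ 'n ^ 'n \<Rightarrow> bool" where
  "irreducible_matrix Q \<longleftrightarrow>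
     (\<forall>i j. (i, j) \<in> {(a, b). a \<noteq> b \<and> Q $ a $ b \<noteq> 0}\<^sup>*)"

definition Lstar :: "real ^ 'n ^ 'n \<Rightarrow> real ^ 'n \<Rightarrow> real ^ 'n ^ 'n" where
  "Lstar Q v = (\<chi> i j. if i = j then (\<Sum>k\<in>UNIV - {i}. Q $ k $ i * v $ k / v $ i)
                        else - (Q $ j $ i * v $ j / v $ i))"

definition Amat :: "real ^ 'n ^ 'n \<Rightarrow> real ^ 'n \<Rightarrow> real ^ 'n \<Rightarrow> real ^ 'n \<Rightarrow> real ^ 'n ^ 'n" where
  "Amat Q v \<beta> \<delta> = matrix_inv (Lstar Q v + diagm \<delta>) ** diagm \<beta>"

definition Hmap :: "real ^ 'n ^ 'n \<Rightarrow> real ^ 'n \<Rightarrow> real ^ 'n" where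
  "Hmap A p = matrix_inv (mat 1 + A ** diagm p) *v (A *v p)"

end

theory Submission
  imports Defs
begin

(*
  A positive fixed point p of H is a positive solution of M p = \<beta> p (1 - p), componentwise,
  where M = L* + D: clearing the inverses in H only needs M and M + diag(\<beta> p) to be invertible.
  Every M + diag(c) with c \<ge> 0 is a Z-matrix with nonnegative row sums \<delta> + c (the rows of L*
  sum to zero), one of them positive, and with the off-diagonal zero pattern of Q transposed.
  By the maximum principle such a matrix has trivial kernel: where a null vector attains a
  positive maximum the row sum vanishes and the maximum spreads along the edges, hence by
  irreducibility to every row.
  For uniqueness compare two positive solutions p, q at an index k maximising t = q_k / p_k:
  as q \<le> t p with equality at k, the sign pattern of M gives (M q)_k \<ge> t (M p)_k, that is
  1 - q_k \<ge> 1 - p_k. So t \<le> 1 and q \<le> p; by symmetry p = q.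
*)

lemma matrix_inv_right: "invertible A \<Longrightarrow> A ** matrix_inv A = mat 1"
  unfolding invertible_def matrix_inv_def by (rule someI_ex[THEN conjunct1])

lemma matrix_inv_left: "invertible A \<Longrightarrow> matrix_inv A ** A = mat 1"
  unfolding invertible_def matrix_inv_def by (rule someI_ex[THEN conjunct2])

lemma invertible_matrix_inv: "invertible A \<Longrightarrow> invertible (matrix_inv A)"
  using matrix_inv_left matrix_inv_right unfolding invertible_def by blast

lemma diagm_zero: "diagm 0 = 0"
  by (simp add: vec_eq_iff diagm_def)

lemma diagm_add: "diagm a + diagm b = diagm (a + b)"
  by (simp add: vec_eq_iff diagm_def)

lemma diagm_mult_vector: "diagm a *v x = a * x"
  by (simp add: vec_eq_iff matrix_vector_mult_def diagm_def mult_delta_left)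

lemma diagm_mult_diagm: "diagm a ** diagm b = diagm (a * b)"
  by (simp add: vec_eq_iff matrix_matrix_mult_def diagm_def mult_delta_left mult_delta_right)

lemma obtain_argmax_finite:
  fixes f :: "'n::finite \<Rightarrow> 'a::linorder"
  obtains k where "\<And>i. f i \<le> f k"
proof -
  have "Max (range f) \<in> range f"
    by (rule Max_in) auto
  then obtain k where "f k = Max (range f)"
    by (metis rangeE)
  moreover have "f i \<le> Max (range f)" for i
    by (rule Max_ge) auto
  ultimately show thesis
    using that[of k] by simp
qed

lemma irreducible_matrix_cong:
  assumes "\<And>i j. i \<noteq> j \<Longrightarrow> N $ i $ j = 0 \<longleftrightarrow> N' $ i $ j = 0"
  shows "irreducible_matrix N \<longleftrightarrow> irreducible_matrix N'"
proof -
  have "{(a, b). a \<noteq> b \<and> N $ a $ b \<noteq> 0} = {(a, b). a \<noteq> b \<and> N' $ a $ b \<noteq> 0}"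
    using assms by blast
  then show ?thesis
    by (simp only: irreducible_matrix_def)
qed

lemma irreducible_matrix_transpose:
  "irreducible_matrix (transpose N) \<longleftrightarrow> irreducible_matrix N"
proof -
  have graph_eq: "{(a, b). a \<noteq> b \<and> transpose N $ a $ b \<noteq> 0}
      = {(a, b). a \<noteq> b \<and> N $ a $ b \<noteq> 0}\<inverse>"
    by (auto simp: transpose_def)
  show ?thesis
    unfolding irreducible_matrix_def graph_eq rtrancl_converse converse_iff by (rule all_comm)
qed

definition Z_matrix :: "real ^ 'n ^ 'n \<Rightarrow> bool" where
  "Z_matrix N \<longleftrightarrow> (\<forall>i j. i \<noteq> j \<longrightarrow> N $ i $ j \<le> 0)"

lemma Z_matrix_add_diagm: "Z_matrix N \<Longrightarrow> Z_matrix (N + diagm d)"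
  by (simp add: Z_matrix_def diagm_def)

lemma matrix_vector_mult_diff_component:
  fixes N :: "'a::comm_ring_1 ^ 'n ^ 'm"
  shows "(N *v y) $ k - (N *v x) $ k = (\<Sum>j\<in>UNIV. N $ k $ j * (y $ j - x $ j))"
  by (simp add: matrix_vector_mult_def sum_subtractf right_diff_distrib)

lemma Z_matrix_diff_term_nonneg:
  assumes "Z_matrix N" and "y $ j \<le> x $ j" and "y $ k = x $ k"
  shows "N $ k $ j * (y $ j - x $ j) \<ge> 0"
  using assms unfolding Z_matrix_def by (cases "j = k") (auto intro: mult_nonpos_nonpos)

lemma Z_matrix_mult_vector_le_at:
  fixes N :: "real ^ 'n ^ 'n"
  assumes "Z_matrix N" and "\<And>j. y $ j \<le> x $ j" and "y $ k = x $ k"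
  shows "(N *v x) $ k \<le> (N *v y) $ k"
proof -
  have "(\<Sum>j\<in>UNIV. N $ k $ j * (y $ j - x $ j)) \<ge> 0"
    using Z_matrix_diff_term_nonneg[OF assms(1) assms(2) assms(3)] by (simp add: sum_nonneg)
  then show ?thesis
    using matrix_vector_mult_diff_component[of N y k x] by linarith
qed

lemma Z_matrix_mult_vector_eq_at:
  fixes N :: "real ^ 'n ^ 'n"
  assumes "Z_matrix N" and "\<And>j. y $ j \<le> x $ j" and "y $ k = x $ k"
    and "(N *v x) $ k = (N *v y) $ k" and "N $ k $ j \<noteq> 0"
  shows "x $ j = y $ j"
proof -
  have "(\<Sum>j\<in>UNIV. N $ k $ j * (y $ j - x $ j)) = 0"
    using matrix_vector_mult_diff_component[of N y k x] assms(4) by simp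
  then have "N $ k $ j * (y $ j - x $ j) = 0"
    using sum_nonneg_eq_0_iff[of UNIV "\<lambda>j. N $ k $ j * (y $ j - x $ j)"]
      Z_matrix_diff_term_nonneg[OF assms(1) assms(2) assms(3)] by simp
  then show ?thesis
    using assms(5) by simp
qed

lemma Z_matrix_null_vector_nonpos:
  fixes N :: "real ^ 'n ^ 'n"
  assumes Z: "Z_matrix N" and irr: "irreducible_matrix N"
    and rows_nonneg: "\<And>i. (\<Sum>j\<in>UNIV. N $ i $ j) \<ge> 0"
    and row_pos: "\<exists>i. (\<Sum>j\<in>UNIV. N $ i $ j) > 0"
    and null: "N *v x = 0"
  shows "x $ i \<le> 0"
proof (rule ccontr)
  assume "\<not> x $ i \<le> 0"
  obtain i0 where max: "\<And>j. x $ j \<le> x $ i0"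
    using obtain_argmax_finite[of "\<lambda>j. x $ j"] by blast
  define m where "m = x $ i0"
  have "m > 0"
    using \<open>\<not> x $ i \<le> 0\<close> max[of i] unfolding m_def by linarith
  define c :: "real ^ 'n" where "c = (\<chi> j. m)"
  have at_max: "(\<Sum>j\<in>UNIV. N $ k $ j) = 0 \<and> (\<forall>j. N $ k $ j \<noteq> 0 \<longrightarrow> x $ j = m)"
    if "x $ k = m" for k
  proof -
    have le: "\<And>j. x $ j \<le> c $ j" and eq: "x $ k = c $ k"
      using max that by (auto simp: c_def m_def)
    have Nc: "(N *v c) $ k = m * (\<Sum>j\<in>UNIV. N $ k $ j)"
      by (simp add: c_def matrix_vector_mult_def sum_distrib_left mult.commute)
    have "(N *v c) $ k \<le> 0"
      using Z_matrix_mult_vector_le_at[OF Z le eq] null by simp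
    then have row0: "(\<Sum>j\<in>UNIV. N $ k $ j) = 0"
      using Nc rows_nonneg[of k] \<open>m > 0\<close> by (simp add: mult_le_0_iff)
    then have "(N *v x) $ k = (N *v c) $ k"
      using Nc null by simp
    then show ?thesis
      using row0 Z_matrix_mult_vector_eq_at[OF Z le eq] by (auto simp: c_def)
  qed
  have "x $ j = m" if "(i0, j) \<in> {(a, b). a \<noteq> b \<and> N $ a $ b \<noteq> 0}\<^sup>*" for j
    using that
  proof (induction rule: rtrancl_induct)
    case base
    show ?case by (simp add: m_def)
  next
    case (step k j)
    then show ?case using at_max[of k] by auto
  qed
  then have "(\<Sum>j\<in>UNIV. N $ k $ j) = 0" for k
    using at_max irr unfolding irreducible_matrix_def by blast
  with row_pos show False
    by simp
qed

lemma Z_matrix_invertible: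
  fixes N :: "real ^ 'n ^ 'n"
  assumes "Z_matrix N" and "irreducible_matrix N"
    and "\<And>i. (\<Sum>j\<in>UNIV. N $ i $ j) \<ge> 0"
    and "\<exists>i. (\<Sum>j\<in>UNIV. N $ i $ j) > 0"
  shows "invertible N"
proof -
  have "x = 0" if "N *v x = 0" for x
  proof -
    have "N *v (- x) = 0"
      using that matrix_vector_mult_diff_distrib[of N 0 x] by simp
    then have "x $ i \<le> 0" and "- x $ i \<le> 0" for i
      using Z_matrix_null_vector_nonpos[OF assms] that by (metis vector_uminus_component)+
    then show ?thesis
      by (simp add: vec_eq_iff order_antisym)
  qed
  then show ?thesis
    by (simp add: invertible_left_inverse matrix_left_invertible_ker)
qed

lemma Z_matrix_positive_solution_le:
  fixes M :: "real ^ 'n ^ 'n" and g :: "'n \<Rightarrow> real \<Rightarrow> real"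
  assumes Z: "Z_matrix M" and g_decreasing: "\<And>i s t. s < t \<Longrightarrow> g i t < g i s"
    and p_pos: "\<And>i. p $ i > 0" and q_pos: "\<And>i. q $ i > 0"
    and p_sol: "\<And>i. (M *v p) $ i = p $ i * g i (p $ i)"
    and q_sol: "\<And>i. (M *v q) $ i = q $ i * g i (q $ i)"
  shows "q $ i \<le> p $ i"
proof -
  obtain k where k_max: "\<And>j. q $ j / p $ j \<le> q $ k / p $ k"
    using obtain_argmax_finite[of "\<lambda>j. q $ j / p $ j"] by blast
  define t where "t = q $ k / p $ k"
  have le: "q $ j \<le> (t *s p) $ j" for j
    using k_max[of j] p_pos[of j] by (simp add: t_def pos_divide_le_eq)
  have eq: "q $ k = (t *s p) $ k"
    using p_pos[of k] by (simp add: t_def)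
  have "q $ k * g k (p $ k) = (M *v (t *s p)) $ k"
    using p_sol[of k] eq by (simp add: vector_scalar_commute)
  also have "\<dots> \<le> (M *v q) $ k"
    by (rule Z_matrix_mult_vector_le_at[OF Z le eq])
  also have "\<dots> = q $ k * g k (q $ k)"
    by (rule q_sol)
  finally have "g k (p $ k) \<le> g k (q $ k)"
    using q_pos[of k] by simp
  then have "q $ k \<le> p $ k"
    using g_decreasing[of "p $ k" "q $ k" k] by linarith
  then have "t \<le> 1"
    using p_pos[of k] by (simp add: t_def)
  then show ?thesis
    using le[of i] p_pos[of i] by (simp add: mult_left_le_one_le order_trans)
qed

lemma Z_matrix_positive_solution_unique:
  fixes M :: "real ^ 'n ^ 'n" and g :: "'n \<Rightarrow> real \<Rightarrow> real"
  assumes "Z_matrix M" and "\<And>i s t. s < t \<Longrightarrow> g i t < g i s"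
    and "\<And>i. p $ i > 0" and "\<And>i. q $ i > 0"
    and "\<And>i. (M *v p) $ i = p $ i * g i (p $ i)"
    and "\<And>i. (M *v q) $ i = q $ i * g i (q $ i)"
  shows "p = q"
  using Z_matrix_positive_solution_le[OF assms] Z_matrix_positive_solution_le[OF assms(1,2,4,3,6,5)]
  by (simp add: vec_eq_iff order_antisym)

lemma Lstar_row_sum: "(\<Sum>j\<in>UNIV. Lstar Q v $ i $ j) = 0"
proof -
  have "(\<Sum>j\<in>UNIV - {i}. Lstar Q v $ i $ j)
      = - (\<Sum>j\<in>UNIV - {i}. Q $ j $ i * v $ j / v $ i)"
    by (simp add: Lstar_def sum_negf)
  then show ?thesis
    by (simp add: sum.remove[of UNIV i] Lstar_def)
qed

lemma Z_matrix_Lstar: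
  assumes "generator_matrix Q" and "\<And>i. v $ i > 0"
  shows "Z_matrix (Lstar Q v)"
  using assms unfolding Z_matrix_def generator_matrix_def Lstar_def
  by (simp add: less_imp_le)

lemma Lstar_plus_diagm_invertible:
  assumes Q: "generator_matrix Q" "irreducible_matrix Q" and v_pos: "\<And>i. v $ i > 0"
    and d_nonneg: "\<And>i. d $ i \<ge> 0" and d_pos: "\<exists>i. d $ i > 0"
  shows "invertible (Lstar Q v + diagm d)"
proof (rule Z_matrix_invertible)
  show "Z_matrix (Lstar Q v + diagm d)"
    by (rule Z_matrix_add_diagm[OF Z_matrix_Lstar[OF Q(1) v_pos]])
  have "Lstar Q v $ i $ j = 0 \<longleftrightarrow> transpose Q $ i $ j = 0" if "i \<noteq> j" for i j
    using that v_pos[of i] v_pos[of j] by (simp add: Lstar_def transpose_def)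
  then show "irreducible_matrix (Lstar Q v + diagm d)"
    using Q(2) irreducible_matrix_cong[of "Lstar Q v + diagm d" "transpose Q"]
    by (simp add: diagm_def irreducible_matrix_transpose)
  have row_sum: "(\<Sum>j\<in>UNIV. (Lstar Q v + diagm d) $ i $ j) = d $ i" for i
    using Lstar_row_sum[of Q v i] by (simp add: sum.distrib diagm_def)
  show "(\<Sum>j\<in>UNIV. (Lstar Q v + diagm d) $ i $ j) \<ge> 0" for i
    using row_sum d_nonneg by simp
  show "\<exists>i. (\<Sum>j\<in>UNIV. (Lstar Q v + diagm d) $ i $ j) > 0"
    using row_sum d_pos by simp
qed

lemma Hmap_fixed_pointD:
  fixes M :: "real ^ 'n ^ 'n" and \<beta> p :: "real ^ 'n"
  assumes M_inv: "invertible M" and shifted_inv: "invertible (M + diagm (\<beta> * p))"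
    and fixed: "Hmap (matrix_inv M ** diagm \<beta>) p = p"
  shows "M *v p = \<beta> * p * (1 - p)"
proof -
  define C where "C = mat 1 + matrix_inv M ** diagm \<beta> ** diagm p"
  have C_eq: "C = matrix_inv M ** (M + diagm (\<beta> * p))"
    by (simp add: C_def matrix_add_ldistrib matrix_inv_left[OF M_inv] diagm_mult_diagm
        flip: matrix_mul_assoc)
  have C_inv: "invertible C"
    unfolding C_eq by (rule invertible_mult[OF invertible_matrix_inv[OF M_inv] shifted_inv])
  have "C *v p = C *v (matrix_inv C *v (matrix_inv M ** diagm \<beta> *v p))"
    using fixed by (simp add: Hmap_def C_def)
  also have "\<dots> = matrix_inv M ** diagm \<beta> *v p"
    by (simp only: matrix_vector_mul_assoc[of C] matrix_inv_right[OF C_inv] matrix_vector_mul_lid)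
  finally have "M *v (matrix_inv M *v ((M + diagm (\<beta> * p)) *v p))
      = M *v (matrix_inv M *v (diagm \<beta> *v p))"
    by (simp add: C_eq matrix_vector_mul_assoc)
  then have "M *v p + \<beta> * p * p = \<beta> * p"
    by (simp add: matrix_vector_mul_assoc matrix_inv_right[OF M_inv]
        matrix_vector_mult_add_rdistrib diagm_mult_vector)
  then show ?thesis
    by (simp add: algebra_simps)
qed

lemma Amat_fixed_point_equation:
  fixes Q :: "real ^ 'n ^ 'n" and v \<beta> \<delta> p :: "real ^ 'n"
  assumes Q: "generator_matrix Q" "irreducible_matrix Q" and v_pos: "\<And>i. v $ i > 0"
    and \<beta>_pos: "\<And>i. \<beta> $ i > 0"
    and \<delta>_nonneg: "\<And>i. \<delta> $ i \<ge> 0" and \<delta>_pos: "\<exists>i. \<delta> $ i > 0"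
    and p_pos: "\<And>i. p $ i > 0" and fixed: "Hmap (Amat Q v \<beta> \<delta>) p = p"
  shows "((Lstar Q v + diagm \<delta>) *v p) $ i = p $ i * (\<beta> $ i * (1 - p $ i))"
proof -
  have shifted_inv: "invertible (Lstar Q v + diagm \<delta> + diagm (\<beta> * x))"
    if "\<And>i. x $ i \<ge> 0" for x
  proof -
    have "\<exists>i. (\<delta> + \<beta> * x) $ i > 0"
      using \<delta>_pos \<beta>_pos \<delta>_nonneg that
      by (metis add_pos_nonneg less_imp_le mult_nonneg_nonneg vector_add_component
          vector_mult_component)
    then have "invertible (Lstar Q v + diagm (\<delta> + \<beta> * x))"
      using Lstar_plus_diagm_invertible[OF Q v_pos] \<beta>_pos \<delta>_nonneg that
      by (simp add: less_imp_le)
    then show ?thesis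
      by (simp add: add.assoc diagm_add)
  qed
  have "(Lstar Q v + diagm \<delta>) *v p = \<beta> * p * (1 - p)"
    using Hmap_fixed_pointD shifted_inv[of 0] shifted_inv[of p] p_pos fixed
    by (simp add: Amat_def diagm_zero less_imp_le)
  then show ?thesis
    by (simp add: vec_eq_iff algebra_simps)
qed

theorem proposition2:
  fixes Q :: "real ^ 'n ^ 'n" and v \<beta> \<delta> pstar :: "real ^ 'n"
  assumes "CARD('n) \<ge> 2"
    and "generator_matrix Q" and "irreducible_matrix Q"
    and "\<forall>i. v $ i > 0" and "transpose Q *v v = 0" and "(\<Sum>i\<in>UNIV. v $ i) = 1"
    and "\<forall>i. \<beta> $ i > 0"
    and "\<forall>i. \<delta> $ i \<ge> 0" and "\<exists>i. \<delta> $ i > 0"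
    and "\<forall>i. pstar $ i > 0"
    and "Hmap (Amat Q v \<beta> \<delta>) pstar = pstar"
  shows "\<forall>p :: real ^ 'n. (\<forall>i. p $ i > 0) \<and> Hmap (Amat Q v \<beta> \<delta>) p = p \<longrightarrow> p = pstar"
proof (intro allI impI)
  fix p :: "real ^ 'n"
  assume p: "(\<forall>i. p $ i > 0) \<and> Hmap (Amat Q v \<beta> \<delta>) p = p"
  let ?M = "Lstar Q v + diagm \<delta>"
  have fixed_point_eq: "(?M *v x) $ i = x $ i * (\<beta> $ i * (1 - x $ i))"
    if "\<forall>i. x $ i > 0" and "Hmap (Amat Q v \<beta> \<delta>) x = x" for x i
    using Amat_fixed_point_equation[of Q v \<beta> \<delta> x] assms(2-4,7-9) that by simp
  show "p = pstar"
  proof (rule Z_matrix_positive_solution_unique[where g = "\<lambda>i s. \<beta> $ i * (1 - s)"])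
    show "Z_matrix ?M"
      using Z_matrix_Lstar assms(2,4) by (blast intro: Z_matrix_add_diagm)
    show "\<beta> $ i * (1 - t) < \<beta> $ i * (1 - s)" if "s < t" for i s t
      using assms(7) that by simp
  qed (use assms(10,11) p fixed_point_eq in blast)+
qed

end
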